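(* Let $G$ be a discrete (not necessarily countable) amenable ICC group, and let $X$ be a finite symmetric subset of $G$. Then the set of super-switching elements for $X$ is infinite.
   Context: A group has the infinite conjugacy class property (ICC) if it is non-trivial and every non-identity element has an infinite conjugacy class. A subset $X\subseteq G$ is symmetric if $X=X^{-1}$. An element $g\in G$ is a super-switching element for $X$ if $X\cap\big(gXg\cup gXg^{-1}\cup g^{-1}Xg\cup g^{-1}Xg^{-1}\big)\subseteq\{e\}$. *)

theory Defs
  imports Complex_Main "HOL-Algebra.Group"
begin

definition amenable_group :: "('a, 'b) monoid_scheme \<Rightarrow> bool" where
  "amenable_group G \<longleftrightarrow> group G \<and>
     (\<exists>\<mu> :: 'a set \<Rightarrow> real.
        \<mu> (carrier G) = 1 \<and>
        (\<forall>A. A \<subseteq> carrier G \<longrightarrow> \<mu> A \<ge> 0) \<and>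
        (\<forall>A B. A \<subseteq> carrier G \<longrightarrow> B \<subseteq> carrier G \<longrightarrow> A \<inter> B = {}
               \<longrightarrow> \<mu> (A \<union> B) = \<mu> A + \<mu> B) \<and>
        (\<forall>g\<in>carrier G. \<forall>A. A \<subseteq> carrier G \<longrightarrow> \<mu> ((\<lambda>x. g \<otimes>\<^bsub>G\<^esub> x) ` A) = \<mu> A))"

definition ICC :: "('a, 'b) monoid_scheme \<Rightarrow> bool" where
  "ICC G \<longleftrightarrow> carrier G \<noteq> {\<one>\<^bsub>G\<^esub>} \<and>
     (\<forall>g\<in>carrier G. g \<noteq> \<one>\<^bsub>G\<^esub> \<longrightarrow>
        infinite {h \<otimes>\<^bsub>G\<^esub> g \<otimes>\<^bsub>G\<^esub> inv\<^bsub>G\<^esub> h | h. h \<in> carrier G})"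

definition symmetric_subset :: "('a, 'b) monoid_scheme \<Rightarrow> 'a set \<Rightarrow> bool" where
  "symmetric_subset G X \<longleftrightarrow> X = (\<lambda>x. inv\<^bsub>G\<^esub> x) ` X"

definition super_switching :: "('a, 'b) monoid_scheme \<Rightarrow> 'a set \<Rightarrow> 'a \<Rightarrow> bool" where
  "super_switching G X g \<longleftrightarrow>
     X \<inter> ((\<lambda>x. g \<otimes>\<^bsub>G\<^esub> x \<otimes>\<^bsub>G\<^esub> g) ` X
          \<union> (\<lambda>x. g \<otimes>\<^bsub>G\<^esub> x \<otimes>\<^bsub>G\<^esub> inv\<^bsub>G\<^esub> g) ` X
          \<union> (\<lambda>x. inv\<^bsub>G\<^esub> g \<otimes>\<^bsub>G\<^esub> x \<otimes>\<^bsub>G\<^esub> g) ` X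
          \<union> (\<lambda>x. inv\<^bsub>G\<^esub> g \<otimes>\<^bsub>G\<^esub> x \<otimes>\<^bsub>G\<^esub> inv\<^bsub>G\<^esub> g) ` X)
       \<subseteq> {\<one>\<^bsub>G\<^esub>}"

end

theory Submission
  imports Defs
begin

text \<open>
  An invariant mean \<mu> is finitely additive and left invariant, so a set is \<mu>-null as soon as
  infinitely many of its left translates are pairwise almost disjoint. In an ICC group this applies
  to the centralizer of any x \<noteq> 1, whose translates by elements conjugating x to different
  elements are disjoint; hence every set {g. g x g\<inverse> = y} with x \<noteq> 1 is null. It then
  applies to the square roots R = {g. g g = z}: if s r = t r' with r, r' \<in> R, then r' = a r for
  a = t\<inverse> s \<noteq> 1, and (a r)(a r) = r r says r a r\<inverse> = a\<inverse>, so s R \<inter> t R lies in a translate of a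
  null conjugator set. Translating by w, every set {g. g w g = z} is null too. An element g fails
  to be super-switching for X only if u = g w g, w = g u g, u = g w g\<inverse> or w = g u g\<inverse> for some
  u, w \<in> X with u \<noteq> 1, so the non-super-switching elements form a null set. Its complement has
  mean 1, while finite sets are null in the infinite group G.
\<close>

lemma (in group) conj_mult:
  assumes "a \<in> carrier G" "b \<in> carrier G" "x \<in> carrier G"
  shows "(a \<otimes> b) \<otimes> x \<otimes> inv (a \<otimes> b) = a \<otimes> (b \<otimes> x \<otimes> inv b) \<otimes> inv a"
  using assms by (simp add: inv_mult_group m_assoc)

lemma (in group) inv_conj_eq_iff:
  assumes "g \<in> carrier G" "x \<in> carrier G" "y \<in> carrier G"
  shows "inv g \<otimes> x \<otimes> g = y \<longleftrightarrow> g \<otimes> y \<otimes> inv g = x"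
  using assms by (metis inv_closed inv_solve_left' inv_solve_right' m_assoc m_closed)

lemma (in group) inv_twisted_conj_eq_iff:
  assumes "g \<in> carrier G" "x \<in> carrier G" "y \<in> carrier G"
  shows "inv g \<otimes> x \<otimes> inv g = y \<longleftrightarrow> g \<otimes> y \<otimes> g = x"
  using assms by (metis inv_closed inv_solve_left' inv_solve_right' m_assoc m_closed)

lemma (in group) conj_eq_inv_if_square_eq:
  assumes "a \<in> carrier G" "r \<in> carrier G" "(a \<otimes> r) \<otimes> (a \<otimes> r) = r \<otimes> r"
  shows "r \<otimes> a \<otimes> inv r = inv a"
  using assms by (metis inv_closed inv_solve_left' inv_solve_right' m_assoc m_closed)

lemma (in group) not_super_switching_witness:
  assumes "g \<in> carrier G" "X \<subseteq> carrier G" "\<not> super_switching G X g"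
  obtains u w where "u \<in> X" "w \<in> X" "u \<noteq> \<one>"
    "g \<otimes> w \<otimes> g = u \<or> g \<otimes> u \<otimes> g = w \<or> g \<otimes> w \<otimes> inv g = u \<or> g \<otimes> u \<otimes> inv g = w"
proof -
  obtain u w where uw: "u \<in> X" "w \<in> X" "u \<noteq> \<one>"
    "u = g \<otimes> w \<otimes> g \<or> u = g \<otimes> w \<otimes> inv g \<or> u = inv g \<otimes> w \<otimes> g \<or> u = inv g \<otimes> w \<otimes> inv g"
    using assms(3) unfolding super_switching_def by blast
  have "u \<in> carrier G" "w \<in> carrier G"
    using uw(1,2) assms(2) by auto
  then have "g \<otimes> w \<otimes> g = u \<or> g \<otimes> u \<otimes> g = w \<or> g \<otimes> w \<otimes> inv g = u \<or> g \<otimes> u \<otimes> inv g = w"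
    using uw(4) inv_conj_eq_iff[OF assms(1)] inv_twisted_conj_eq_iff[OF assms(1)] by metis
  with uw(1-3) show thesis by (rule that)
qed

lemma ICC_conj_class_infinite:
  "ICC G \<Longrightarrow> x \<in> carrier G \<Longrightarrow> x \<noteq> \<one>\<^bsub>G\<^esub> \<Longrightarrow>
    infinite {h \<otimes>\<^bsub>G\<^esub> x \<otimes>\<^bsub>G\<^esub> inv\<^bsub>G\<^esub> h | h. h \<in> carrier G}"
  by (simp add: ICC_def)

lemma (in group) ICC_infinite_carrier:
  assumes "ICC G"
  shows "infinite (carrier G)"
proof -
  obtain x where x: "x \<in> carrier G" "x \<noteq> \<one>"
    using assms one_closed unfolding ICC_def by blast
  have "{h \<otimes> x \<otimes> inv h | h. h \<in> carrier G} \<subseteq> carrier G"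
    using x(1) by auto
  then show ?thesis
    using ICC_conj_class_infinite[OF assms x] finite_subset by blast
qed

locale invariant_mean = group G for G (structure) +
  fixes \<mu> :: "'a set \<Rightarrow> real"
  assumes mean_carrier: "\<mu> (carrier G) = 1"
    and mean_nonneg: "A \<subseteq> carrier G \<Longrightarrow> 0 \<le> \<mu> A"
    and mean_additive:
      "A \<subseteq> carrier G \<Longrightarrow> B \<subseteq> carrier G \<Longrightarrow> A \<inter> B = {} \<Longrightarrow> \<mu> (A \<union> B) = \<mu> A + \<mu> B"
    and mean_translate: "g \<in> carrier G \<Longrightarrow> A \<subseteq> carrier G \<Longrightarrow> \<mu> ((\<lambda>x. g \<otimes> x) ` A) = \<mu> A"

lemma amenable_group_imp_invariant_mean:
  assumes "amenable_group G"
  obtains \<mu> where "invariant_mean G \<mu>"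
proof -
  from assms obtain \<mu> :: "'a set \<Rightarrow> real" where
    "\<mu> (carrier G) = 1" "\<forall>A. A \<subseteq> carrier G \<longrightarrow> 0 \<le> \<mu> A"
    "\<forall>A B. A \<subseteq> carrier G \<longrightarrow> B \<subseteq> carrier G \<longrightarrow> A \<inter> B = {} \<longrightarrow> \<mu> (A \<union> B) = \<mu> A + \<mu> B"
    "\<forall>g\<in>carrier G. \<forall>A. A \<subseteq> carrier G \<longrightarrow> \<mu> ((\<lambda>x. g \<otimes>\<^bsub>G\<^esub> x) ` A) = \<mu> A"
    unfolding amenable_group_def by (elim conjE exE) blast
  moreover have "group G"
    using assms unfolding amenable_group_def by blast
  ultimately have "invariant_mean G \<mu>"
    by (simp add: invariant_mean_def invariant_mean_axioms_def)
  then show thesis by (rule that)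
qed

context invariant_mean
begin

lemma mean_empty: "\<mu> {} = 0"
  using mean_additive[of "{}" "{}"] by simp

lemma mean_mono:
  assumes "A \<subseteq> B" "B \<subseteq> carrier G"
  shows "\<mu> A \<le> \<mu> B"
proof -
  have "A \<union> (B - A) = B" using assms(1) by blast
  then have "\<mu> B = \<mu> A + \<mu> (B - A)"
    using mean_additive[of A "B - A"] assms by auto
  moreover have "0 \<le> \<mu> (B - A)"
    using mean_nonneg assms(2) by blast
  ultimately show ?thesis by linarith
qed

lemma null_subset: "A \<subseteq> B \<Longrightarrow> B \<subseteq> carrier G \<Longrightarrow> \<mu> B = 0 \<Longrightarrow> \<mu> A = 0"
  using mean_mono[of A B] mean_nonneg[of A] by fastforce

lemma mean_Diff_null:
  assumes "A \<subseteq> carrier G" "\<mu> N = 0" "N \<subseteq> carrier G"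
  shows "\<mu> (A - N) = \<mu> A"
proof -
  have "(A - N) \<union> (A \<inter> N) = A" by blast
  then have "\<mu> A = \<mu> (A - N) + \<mu> (A \<inter> N)"
    using mean_additive[of "A - N" "A \<inter> N"] assms(1) by auto
  moreover have "\<mu> (A \<inter> N) = 0"
    using null_subset[of "A \<inter> N" N] assms(2,3) by blast
  ultimately show ?thesis by simp
qed

lemma null_Un:
  assumes "A \<subseteq> carrier G" "B \<subseteq> carrier G" "\<mu> A = 0" "\<mu> B = 0"
  shows "\<mu> (A \<union> B) = 0"
proof -
  have "\<mu> (A \<union> B) = \<mu> ((A \<union> B) - B)"
    using mean_Diff_null[of "A \<union> B" B] assms by simp
  also have "\<dots> = 0"
    using null_subset[of "(A \<union> B) - B" A] assms by blast
  finally show ?thesis .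
qed

lemma null_UN:
  assumes "finite I" "\<And>i. i \<in> I \<Longrightarrow> N i \<subseteq> carrier G" "\<And>i. i \<in> I \<Longrightarrow> \<mu> (N i) = 0"
  shows "\<mu> (\<Union>i\<in>I. N i) = 0"
  using assms
proof (induction I rule: finite_induct)
  case empty
  then show ?case by (simp add: mean_empty)
next
  case (insert i I)
  have "(\<Union>j\<in>I. N j) \<subseteq> carrier G" "\<mu> (\<Union>j\<in>I. N j) = 0"
    using insert.IH insert.prems by auto
  then show ?case
    using null_Un[of "N i" "\<Union>j\<in>I. N j"] insert.prems by simp
qed

lemma mean_UN_almost_disjoint_translates:
  assumes "finite F" "F \<subseteq> carrier G" "A \<subseteq> carrier G"
    and "\<And>s t. s \<in> F \<Longrightarrow> t \<in> F \<Longrightarrow> s \<noteq> t \<Longrightarrow>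
      \<mu> ((\<lambda>x. s \<otimes> x) ` A \<inter> (\<lambda>x. t \<otimes> x) ` A) = 0"
  shows "\<mu> (\<Union>t\<in>F. (\<lambda>x. t \<otimes> x) ` A) = real (card F) * \<mu> A"
  using assms(1,2,4)
proof (induction F rule: finite_induct)
  case empty
  show ?case by (simp add: mean_empty)
next
  case (insert s F)
  let ?T = "\<lambda>t. (\<lambda>x. t \<otimes> x) ` A"
  let ?U = "\<Union>t\<in>F. ?T t"
  have s: "s \<in> carrier G" and F: "F \<subseteq> carrier G"
    using insert.prems(1) by auto
  have translate_closed: "?T t \<subseteq> carrier G" if "t \<in> carrier G" for t
    using that assms(3) by auto
  have U: "?U \<subseteq> carrier G"
    using F translate_closed by blast
  have mean_U: "\<mu> ?U = real (card F) * \<mu> A"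
    by (intro insert.IH[OF F] insert.prems(2)) auto
  have "\<mu> (\<Union>t\<in>F. ?T s \<inter> ?T t) = 0"
  proof (rule null_UN[OF insert.hyps(1)])
    fix t assume "t \<in> F"
    then show "?T s \<inter> ?T t \<subseteq> carrier G"
      using s translate_closed by blast
    have "s \<noteq> t"
      using \<open>t \<in> F\<close> insert.hyps(2) by blast
    then show "\<mu> (?T s \<inter> ?T t) = 0"
      using \<open>t \<in> F\<close> insert.prems(2)[of s t] by simp
  qed
  then have "\<mu> (?T s \<inter> ?U) = 0"
    by (simp only: Int_UN_distrib)
  then have "\<mu> (?T s - ?T s \<inter> ?U) = \<mu> (?T s)"
    by (rule mean_Diff_null[OF translate_closed[OF s]]) (use translate_closed[OF s] in blast)
  moreover have "?T s - ?T s \<inter> ?U = ?T s - ?U"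
    by blast
  ultimately have "\<mu> (?T s - ?U) = \<mu> A"
    using mean_translate[OF s assms(3)] by simp
  moreover have "?T s - ?U \<subseteq> carrier G" "(?T s - ?U) \<inter> ?U = {}"
    using translate_closed[OF s] by blast+
  moreover have "?T s \<union> ?U = (?T s - ?U) \<union> ?U"
    by blast
  ultimately have "\<mu> (?T s \<union> ?U) = \<mu> A + \<mu> ?U"
    using mean_additive[of "?T s - ?U" ?U] U by simp
  then show ?case
    using mean_U insert.hyps by (simp add: algebra_simps)
qed

lemma null_if_almost_disjoint_translates:
  assumes "infinite T" "T \<subseteq> carrier G" "A \<subseteq> carrier G"
    and disjoint: "\<And>s t. s \<in> T \<Longrightarrow> t \<in> T \<Longrightarrow> s \<noteq> t \<Longrightarrow>
      \<mu> ((\<lambda>x. s \<otimes> x) ` A \<inter> (\<lambda>x. t \<otimes> x) ` A) = 0"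
  shows "\<mu> A = 0"
proof (rule ccontr)
  assume "\<mu> A \<noteq> 0"
  then have "0 < \<mu> A" using mean_nonneg[OF assms(3)] by simp
  then obtain n where n: "1 < real n * \<mu> A" using ex_less_of_nat_mult by auto
  obtain F where F: "F \<subseteq> T" "finite F" "card F = n"
    using infinite_arbitrarily_large[OF assms(1)] by blast
  have FG: "F \<subseteq> carrier G" using F(1) assms(2) by blast
  have disjoint_F: "\<mu> ((\<lambda>x. s \<otimes> x) ` A \<inter> (\<lambda>x. t \<otimes> x) ` A) = 0"
    if "s \<in> F" "t \<in> F" "s \<noteq> t" for s t
    using that F(1) by (intro disjoint) auto
  have "(\<Union>t\<in>F. (\<lambda>x. t \<otimes> x) ` A) \<subseteq> carrier G"
    using FG assms(3) by auto
  then have "\<mu> (\<Union>t\<in>F. (\<lambda>x. t \<otimes> x) ` A) \<le> 1"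
    using mean_mono[OF _ subset_refl] mean_carrier by metis
  then have "real n * \<mu> A \<le> 1"
    using mean_UN_almost_disjoint_translates[OF F(2) FG assms(3) disjoint_F] F(3) by simp
  with n show False by simp
qed

lemma finite_null:
  assumes "infinite (carrier G)" "finite A" "A \<subseteq> carrier G"
  shows "\<mu> A = 0"
proof -
  have "\<mu> {\<one>} = 0"
  proof (rule null_if_almost_disjoint_translates[of "carrier G"])
    fix s t assume "s \<in> carrier G" "t \<in> carrier G" "s \<noteq> t"
    then show "\<mu> ((\<lambda>x. s \<otimes> x) ` {\<one>} \<inter> (\<lambda>x. t \<otimes> x) ` {\<one>}) = 0"
      by (simp add: mean_empty)
  qed (use assms(1) in auto)
  then have "\<mu> {g} = 0" if "g \<in> carrier G" for g
    using mean_translate[of g "{\<one>}"] that by simp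
  then have "\<mu> (\<Union>g\<in>A. {g}) = 0"
    using assms(2,3) by (intro null_UN) auto
  then show ?thesis by simp
qed

lemma centralizer_null:
  assumes x: "x \<in> carrier G" and "infinite {h \<otimes> x \<otimes> inv h | h. h \<in> carrier G}"
  shows "\<mu> {g \<in> carrier G. g \<otimes> x \<otimes> inv g = x} = 0"
proof -
  define conjugate where "conjugate h = h \<otimes> x \<otimes> inv h" for h
  define C where "C = {g \<in> carrier G. conjugate g = x}"
  \<comment> \<open>One conjugating element per conjugate of x, that is, per left coset of the centralizer.\<close>
  define T where "T = inv_into (carrier G) conjugate ` conjugate ` carrier G"
  have T: "T \<subseteq> carrier G"
    by (auto simp: T_def inv_into_into)
  have "conjugate ` T = conjugate ` carrier G"
    unfolding T_def by (rule image_inv_into_cancel[OF refl subset_refl])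
  moreover have "infinite (conjugate ` carrier G)"
    using assms(2) by (simp add: conjugate_def setcompr_eq_image)
  ultimately have "infinite T"
    by (metis finite_imageI)
  have "\<mu> C = 0"
  proof (rule null_if_almost_disjoint_translates[OF \<open>infinite T\<close> T])
    show "C \<subseteq> carrier G" by (auto simp: C_def)
    have conjugate_translate: "conjugate (s \<otimes> c) = conjugate s" if "s \<in> carrier G" "c \<in> C" for s c
      using that x conj_mult[of s c x] by (simp add: C_def conjugate_def)
    fix s t assume "s \<in> T" "t \<in> T" "s \<noteq> t"
    then have "conjugate s \<noteq> conjugate t"
      by (auto simp: T_def f_inv_into_f)
    have "(\<lambda>c. s \<otimes> c) ` C \<inter> (\<lambda>c. t \<otimes> c) ` C = {}"
    proof (rule ccontr)
      assume "(\<lambda>c. s \<otimes> c) ` C \<inter> (\<lambda>c. t \<otimes> c) ` C \<noteq> {}"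
      then obtain c c' where "c \<in> C" "c' \<in> C" "s \<otimes> c = t \<otimes> c'" by blast
      then have "conjugate s = conjugate t"
        using conjugate_translate \<open>s \<in> T\<close> \<open>t \<in> T\<close> T by (metis subsetD)
      with \<open>conjugate s \<noteq> conjugate t\<close> show False ..
    qed
    then show "\<mu> ((\<lambda>c. s \<otimes> c) ` C \<inter> (\<lambda>c. t \<otimes> c) ` C) = 0"
      by (simp add: mean_empty)
  qed
  then show ?thesis by (simp add: C_def conjugate_def)
qed

lemma conjugator_set_null:
  assumes x: "x \<in> carrier G" and "infinite {h \<otimes> x \<otimes> inv h | h. h \<in> carrier G}"
  shows "\<mu> {g \<in> carrier G. g \<otimes> x \<otimes> inv g = y} = 0"
proof (cases "\<exists>g\<^sub>0\<in>carrier G. g\<^sub>0 \<otimes> x \<otimes> inv g\<^sub>0 = y")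
  case False
  then have "{g \<in> carrier G. g \<otimes> x \<otimes> inv g = y} = {}" by blast
  then show ?thesis by (simp only: mean_empty)
next
  case True
  then obtain g\<^sub>0 where g\<^sub>0: "g\<^sub>0 \<in> carrier G" "g\<^sub>0 \<otimes> x \<otimes> inv g\<^sub>0 = y" by blast
  have y: "y \<in> carrier G"
    using g\<^sub>0 x by (metis inv_closed m_closed)
  define C where "C = {g \<in> carrier G. g \<otimes> x \<otimes> inv g = x}"
  have C: "C \<subseteq> carrier G" by (auto simp: C_def)
  have "{g \<in> carrier G. g \<otimes> x \<otimes> inv g = y} \<subseteq> (\<lambda>c. g\<^sub>0 \<otimes> c) ` C"
  proof
    fix g assume g: "g \<in> {g \<in> carrier G. g \<otimes> x \<otimes> inv g = y}"
    then have "(inv g\<^sub>0 \<otimes> g) \<otimes> x \<otimes> inv (inv g\<^sub>0 \<otimes> g) = inv g\<^sub>0 \<otimes> y \<otimes> g\<^sub>0"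
      using conj_mult[of "inv g\<^sub>0" g x] g\<^sub>0 x by simp
    also have "\<dots> = x"
      using inv_conj_eq_iff[OF g\<^sub>0(1) y x] g\<^sub>0(2) by simp
    finally have "inv g\<^sub>0 \<otimes> g \<in> C"
      using g g\<^sub>0 by (simp add: C_def)
    moreover have "g = g\<^sub>0 \<otimes> (inv g\<^sub>0 \<otimes> g)"
      using g g\<^sub>0 by (simp add: m_assoc [symmetric])
    ultimately show "g \<in> (\<lambda>c. g\<^sub>0 \<otimes> c) ` C" by blast
  qed
  moreover have "(\<lambda>c. g\<^sub>0 \<otimes> c) ` C \<subseteq> carrier G"
    using g\<^sub>0(1) C by auto
  moreover have "\<mu> ((\<lambda>c. g\<^sub>0 \<otimes> c) ` C) = 0"
    using mean_translate[OF g\<^sub>0(1) C] centralizer_null[OF assms] by (simp add: C_def)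
  ultimately show ?thesis by (rule null_subset)
qed

context
  assumes ICC: "ICC G"
begin

lemma ICC_conjugator_set_null:
  assumes "x \<in> carrier G" "x \<noteq> \<one> \<or> y \<noteq> \<one>"
  shows "\<mu> {g \<in> carrier G. g \<otimes> x \<otimes> inv g = y} = 0"
proof (cases "x = \<one>")
  case True
  then have "{g \<in> carrier G. g \<otimes> x \<otimes> inv g = y} = {}"
    using assms(2) by auto
  then show ?thesis by (simp only: mean_empty)
next
  case False
  then show ?thesis
    using conjugator_set_null ICC_conj_class_infinite[OF ICC] assms(1) by blast
qed

lemma square_roots_null: "\<mu> {g \<in> carrier G. g \<otimes> g = z} = 0"
proof (rule null_if_almost_disjoint_translates[OF ICC_infinite_carrier[OF ICC] subset_refl])
  let ?R = "{g \<in> carrier G. g \<otimes> g = z}"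
  show "?R \<subseteq> carrier G" by blast
  fix s t assume st: "s \<in> carrier G" "t \<in> carrier G" "s \<noteq> t"
  define a where "a = inv t \<otimes> s"
  have a: "a \<in> carrier G" "a \<noteq> \<one>"
    using st inv_solve_left'[of \<one> t s] by (auto simp: a_def)
  let ?E = "{g \<in> carrier G. g \<otimes> a \<otimes> inv g = inv a}"
  have "(\<lambda>x. s \<otimes> x) ` ?R \<inter> (\<lambda>x. t \<otimes> x) ` ?R \<subseteq> (\<lambda>x. s \<otimes> x) ` ?E"
  proof
    fix v assume "v \<in> (\<lambda>x. s \<otimes> x) ` ?R \<inter> (\<lambda>x. t \<otimes> x) ` ?R"
    then obtain r r' where r: "r \<in> ?R" "r' \<in> ?R" "v = s \<otimes> r" "s \<otimes> r = t \<otimes> r'"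
      by auto
    then have "r' = a \<otimes> r"
      using st inv_solve_left'[of r' t "s \<otimes> r"] by (simp add: a_def m_assoc)
    then have "(a \<otimes> r) \<otimes> (a \<otimes> r) = r \<otimes> r"
      using r(1,2) by simp
    then have "r \<in> ?E"
      using conj_eq_inv_if_square_eq a(1) r(1) by blast
    then show "v \<in> (\<lambda>x. s \<otimes> x) ` ?E"
      using r(3) by blast
  qed
  moreover have "(\<lambda>x. s \<otimes> x) ` ?E \<subseteq> carrier G"
    using st(1) by auto
  moreover have "\<mu> ((\<lambda>x. s \<otimes> x) ` ?E) = 0"
    using mean_translate[OF st(1)] ICC_conjugator_set_null[of a "inv a"] a by auto
  ultimately show "\<mu> ((\<lambda>x. s \<otimes> x) ` ?R \<inter> (\<lambda>x. t \<otimes> x) ` ?R) = 0"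
    by (rule null_subset)
qed

lemma twisted_square_roots_null:
  assumes w: "w \<in> carrier G"
  shows "\<mu> {g \<in> carrier G. g \<otimes> w \<otimes> g = z} = 0"
proof -
  let ?S = "{g \<in> carrier G. g \<otimes> w \<otimes> g = z}"
  have "(\<lambda>x. w \<otimes> x) ` ?S \<subseteq> {g \<in> carrier G. g \<otimes> g = w \<otimes> z}"
    using w by (auto simp: m_assoc)
  then have "\<mu> ((\<lambda>x. w \<otimes> x) ` ?S) = 0"
    by (rule null_subset) (auto simp: square_roots_null)
  then show ?thesis
    using mean_translate[OF w, of ?S] by auto
qed

theorem super_switching_elements_infinite:
  assumes X: "X \<subseteq> carrier G" "finite X"
  shows "infinite {g \<in> carrier G. super_switching G X g}"
proof
  assume finite: "finite {g \<in> carrier G. super_switching G X g}"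
  define B where "B u w =
    {g \<in> carrier G. g \<otimes> w \<otimes> g = u} \<union> {g \<in> carrier G. g \<otimes> u \<otimes> g = w} \<union>
    {g \<in> carrier G. g \<otimes> w \<otimes> inv g = u} \<union> {g \<in> carrier G. g \<otimes> u \<otimes> inv g = w}" for u w
  define N where "N = (\<Union>u\<in>X - {\<one>}. \<Union>w\<in>X. B u w)"
  have B_carrier: "B u w \<subseteq> carrier G" for u w
    by (auto simp: B_def)
  have B_null: "\<mu> (B u w) = 0" if "u \<in> X - {\<one>}" "w \<in> X" for u w
  proof -
    have "u \<in> carrier G" "w \<in> carrier G" "u \<noteq> \<one>"
      using that X(1) by auto
    then show ?thesis
      unfolding B_def
      by (intro null_Un twisted_square_roots_null ICC_conjugator_set_null) auto
  qed
  have N: "N \<subseteq> carrier G"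
    using B_carrier by (auto simp: N_def)
  have "\<mu> N = 0"
    unfolding N_def using X(2) B_null B_carrier by (intro null_UN) blast+
  then have "\<mu> (carrier G - N) = 1"
    using mean_Diff_null[OF subset_refl _ N] mean_carrier by simp
  moreover have "carrier G - N \<subseteq> {g \<in> carrier G. super_switching G X g}"
  proof
    fix g assume g: "g \<in> carrier G - N"
    show "g \<in> {g \<in> carrier G. super_switching G X g}"
    proof (rule ccontr)
      assume "g \<notin> {g \<in> carrier G. super_switching G X g}"
      then obtain u w where "u \<in> X" "w \<in> X" "u \<noteq> \<one>"
        "g \<otimes> w \<otimes> g = u \<or> g \<otimes> u \<otimes> g = w \<or> g \<otimes> w \<otimes> inv g = u \<or> g \<otimes> u \<otimes> inv g = w"
        using not_super_switching_witness[of g X] g X(1) by auto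
      then have "g \<in> N"
        using g unfolding N_def B_def by blast
      with g show False by simp
    qed
  qed
  then have "\<mu> (carrier G - N) = 0"
    using finite_null[OF ICC_infinite_carrier[OF ICC]] finite finite_subset by blast
  ultimately show False by simp
qed

end

end

theorem proposition2p4:
  fixes G :: "('a, 'b) monoid_scheme" and X :: "'a set"
  assumes "group G"
    and "amenable_group G"
    and "ICC G"
    and "X \<subseteq> carrier G"
    and "finite X"
    and "symmetric_subset G X"
  shows "infinite {g \<in> carrier G. super_switching G X g}"
proof -
  obtain \<mu> where "invariant_mean G \<mu>"
    using amenable_group_imp_invariant_mean[OF assms(2)] .
  then show ?thesis
    using invariant_mean.super_switching_elements_infinite assms(3-5) by blast
qed

end
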